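(* Let $\mathfrak l$ be a real finite-dimensional nilpotent Lie algebra with $\dim\mathfrak l'=2$ and $\mathfrak l'\subset\mathfrak z(\mathfrak l)$, let $X_1,X_2,X_3\in\mathfrak l$ and let $Y,Z$ be a basis of $\mathfrak l'$ such that $[X_1,X_2]=Y$, $[X_1,X_3]=Z$, $[X_2,X_3]=0$. Let $\mathfrak a$ be a semisimple orthogonal $\mathfrak l$-module and let $(\alpha,\gamma)\in\mathcal Z^2_Q(\mathfrak l,\mathfrak a)$ with $\alpha(\mathfrak l,\mathfrak l)\subset\mathfrak a^{\mathfrak l}$. Then: (i) $\alpha(Y,Z)=0$; (ii) $\alpha(Y,L)=0$ for all $L\in\mathfrak l$ with $[L,X_1]=[L,X_2]=0$; (iii) $\alpha(Z,L)=0$ for all $L\in\mathfrak l$ with $[L,X_1]=[L,X_3]=0$; (iv) $\langle\alpha(U_1,L_1),\alpha(U_2,L_2)\rangle=\langle\alpha(U_1,L_2),\alpha(U_2,L_1)\rangle$ for all $U_1,U_2\in\mathfrak l'$ and $L_1,L_2\in\mathfrak l$.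
   Context: $\mathfrak l'=[\mathfrak l,\mathfrak l]$, $\mathfrak z(\mathfrak l)$ the centre. An orthogonal $\mathfrak l$-module is a finite-dimensional real vector space $\mathfrak a$ with a nondegenerate symmetric bilinear form $\langle\cdot,\cdot\rangle$ and a representation of $\mathfrak l$ by skew-adjoint maps; $\mathfrak a^{\mathfrak l}$ denotes the invariants. $C^p(\mathfrak l,\mathfrak a)$ are alternating $p$-linear maps with the Chevalley–Eilenberg differential $d$, $C^p(\mathfrak l)=C^p(\mathfrak l,\mathbb R)$; $\langle\alpha\wedge\alpha\rangle\in C^4(\mathfrak l)$ is the wedge product of $\alpha$ with itself followed by contraction with $\langle\cdot,\cdot\rangle$. $\mathcal Z^2_Q(\mathfrak l,\mathfrak a)=\{(\alpha,\gamma)\in C^2(\mathfrak l,\mathfrak a)\oplus C^3(\mathfrak l): d\alpha=0,\ d\gamma=\frac12\langle\alpha\wedge\alpha\rangle\}$. *)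

theory Defs
  imports "HOL-Analysis.Analysis"
begin

text \<open>Real finite-dimensional Lie algebras are modelled on a type 'l of class
euclidean_space (used only as a finite-dimensional real vector space; its inner
product plays no role), with a bracket br.\<close>

definition lie_algebra :: "('l::real_vector \<Rightarrow> 'l \<Rightarrow> 'l) \<Rightarrow> bool" where
  "lie_algebra br \<longleftrightarrow> bilinear br \<and> (\<forall>x. br x x = 0) \<and>
     (\<forall>x y z. br x (br y z) + br y (br z x) + br z (br x y) = 0)"

definition derived :: "('l::real_vector \<Rightarrow> 'l \<Rightarrow> 'l) \<Rightarrow> 'l set" where
  "derived br = span {br x y | x y. True}"

definition centre :: "('l::real_vector \<Rightarrow> 'l \<Rightarrow> 'l) \<Rightarrow> 'l set" where
  "centre br = {z. \<forall>x. br z x = 0}"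

fun lcs :: "('l::real_vector \<Rightarrow> 'l \<Rightarrow> 'l) \<Rightarrow> nat \<Rightarrow> 'l set" where
  "lcs br 0 = UNIV"
| "lcs br (Suc n) = span {br x y | x y. y \<in> lcs br n}"

definition nilpotent_lie :: "('l::real_vector \<Rightarrow> 'l \<Rightarrow> 'l) \<Rightarrow> bool" where
  "nilpotent_lie br \<longleftrightarrow> lie_algebra br \<and> (\<exists>n. lcs br n = {0})"

definition orthogonal_module ::
  "('l::real_vector \<Rightarrow> 'l \<Rightarrow> 'l) \<Rightarrow> ('l \<Rightarrow> 'a::real_vector \<Rightarrow> 'a) \<Rightarrow> ('a \<Rightarrow> 'a \<Rightarrow> real) \<Rightarrow> bool" where
  "orthogonal_module br rho B \<longleftrightarrow>
     bilinear rho \<and>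
     (\<forall>x y u. rho (br x y) u = rho x (rho y u) - rho y (rho x u)) \<and>
     bilinear B \<and> (\<forall>u v. B u v = B v u) \<and> (\<forall>u. (\<forall>v. B u v = 0) \<longrightarrow> u = 0) \<and>
     (\<forall>x u v. B (rho x u) v + B u (rho x v) = 0)"

definition invariant_subspace :: "('l \<Rightarrow> 'a::real_vector \<Rightarrow> 'a) \<Rightarrow> 'a set \<Rightarrow> bool" where
  "invariant_subspace rho U \<longleftrightarrow> subspace U \<and> (\<forall>x u. u \<in> U \<longrightarrow> rho x u \<in> U)"

definition semisimple_module :: "('l \<Rightarrow> 'a::real_vector \<Rightarrow> 'a) \<Rightarrow> bool" where
  "semisimple_module rho \<longleftrightarrow>
     (\<forall>U. invariant_subspace rho U \<longrightarrow>
        (\<exists>W. invariant_subspace rho W \<and> U \<inter> W = {0} \<and> {u + w | u w. u \<in> U \<and> w \<in> W} = UNIV))"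

definition invariants :: "('l \<Rightarrow> 'a::real_vector \<Rightarrow> 'a) \<Rightarrow> 'a set" where
  "invariants rho = {u. \<forall>x. rho x u = 0}"

definition trilinear :: "('a::real_vector \<Rightarrow> 'a \<Rightarrow> 'a \<Rightarrow> 'b::real_vector) \<Rightarrow> bool" where
  "trilinear f \<longleftrightarrow> (\<forall>y z. linear (\<lambda>x. f x y z)) \<and> (\<forall>x z. linear (\<lambda>y. f x y z)) \<and>
                  (\<forall>x y. linear (\<lambda>z. f x y z))"

definition cochain2 :: "('l::real_vector \<Rightarrow> 'l \<Rightarrow> 'a::real_vector) \<Rightarrow> bool" where
  "cochain2 \<alpha> \<longleftrightarrow> bilinear \<alpha> \<and> (\<forall>x. \<alpha> x x = 0)"

definition cochain3 :: "('l::real_vector \<Rightarrow> 'l \<Rightarrow> 'l \<Rightarrow> real) \<Rightarrow> bool" where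
  "cochain3 \<gamma> \<longleftrightarrow> trilinear \<gamma> \<and> (\<forall>x y. \<gamma> x x y = 0) \<and> (\<forall>x y. \<gamma> x y y = 0)"

definition d2 :: "('l \<Rightarrow> 'l \<Rightarrow> 'l) \<Rightarrow> ('l \<Rightarrow> 'a \<Rightarrow> 'a) \<Rightarrow> ('l \<Rightarrow> 'l \<Rightarrow> 'a::real_vector)
                   \<Rightarrow> 'l \<Rightarrow> 'l \<Rightarrow> 'l \<Rightarrow> 'a" where
  "d2 br rho \<alpha> x y z =
     rho x (\<alpha> y z) - rho y (\<alpha> x z) + rho z (\<alpha> x y)
     - \<alpha> (br x y) z + \<alpha> (br x z) y - \<alpha> (br y z) x"

definition d3 :: "('l \<Rightarrow> 'l \<Rightarrow> 'l) \<Rightarrow> ('l \<Rightarrow> 'l \<Rightarrow> 'l \<Rightarrow> real) \<Rightarrow> 'l \<Rightarrow> 'l \<Rightarrow> 'l \<Rightarrow> 'l \<Rightarrow> real" where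
  "d3 br \<gamma> x1 x2 x3 x4 =
     - \<gamma> (br x1 x2) x3 x4 + \<gamma> (br x1 x3) x2 x4 - \<gamma> (br x1 x4) x2 x3
     - \<gamma> (br x2 x3) x1 x4 + \<gamma> (br x2 x4) x1 x3 - \<gamma> (br x3 x4) x1 x2"

text \<open>\<langle>\<alpha>\<and>\<alpha>\<rangle>: wedge (sum over (2,2)-shuffles with signs) followed by contraction with B.\<close>
definition wedge_contr :: "('a \<Rightarrow> 'a \<Rightarrow> real) \<Rightarrow> ('l \<Rightarrow> 'l \<Rightarrow> 'a) \<Rightarrow> 'l \<Rightarrow> 'l \<Rightarrow> 'l \<Rightarrow> 'l \<Rightarrow> real" where
  "wedge_contr B \<alpha> x1 x2 x3 x4 =
       B (\<alpha> x1 x2) (\<alpha> x3 x4) - B (\<alpha> x1 x3) (\<alpha> x2 x4) + B (\<alpha> x1 x4) (\<alpha> x2 x3)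
     + B (\<alpha> x2 x3) (\<alpha> x1 x4) - B (\<alpha> x2 x4) (\<alpha> x1 x3) + B (\<alpha> x3 x4) (\<alpha> x1 x2)"

definition Z2Q ::
  "('l::real_vector \<Rightarrow> 'l \<Rightarrow> 'l) \<Rightarrow> ('l \<Rightarrow> 'a::real_vector \<Rightarrow> 'a) \<Rightarrow> ('a \<Rightarrow> 'a \<Rightarrow> real)
     \<Rightarrow> ('l \<Rightarrow> 'l \<Rightarrow> 'a) \<Rightarrow> ('l \<Rightarrow> 'l \<Rightarrow> 'l \<Rightarrow> real) \<Rightarrow> bool" where
  "Z2Q br rho B \<alpha> \<gamma> \<longleftrightarrow> cochain2 \<alpha> \<and> cochain3 \<gamma> \<and>
     (\<forall>x y z. d2 br rho \<alpha> x y z = 0) \<and>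
     (\<forall>x1 x2 x3 x4. d3 br \<gamma> x1 x2 x3 x4 = (1/2) * wedge_contr B \<alpha> x1 x2 x3 x4)"

end

theory Submission
  imports Defs
begin

text \<open>Because \<alpha> takes values in the invariants, d\<alpha> = 0 is the cocycle identity with
  trivial coefficients, \<alpha>([x,y],z) = \<alpha>([x,z],y) - \<alpha>([y,z],x). At (X1, X2, L) and
  (X1, X3, L), for L commuting with the X's, it gives (ii) and (iii); (i) is the case L = Z.
  For (iv), evaluate d\<gamma> = \<langle>\<alpha> \<and> \<alpha>\<rangle>/2 at (U1, U2, L1, L2): as U1, U2 are central,
  the left side is -\<gamma>([L1,L2],U1,U2), a value of an alternating 3-form on the
  2-dimensional space l' = span {Y, Z}, hence zero; on the right \<alpha>(U1,U2) = 0 by (i),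
  and the four remaining terms give (iv).\<close>

lemma bilinear_alternating_antisym:
  assumes "bilinear f" "\<And>x. f x x = 0"
  shows "f y x = - f x y"
proof -
  have "f (x + y) (x + y) = f x x + f x y + (f y x + f y y)"
    using assms(1) by (simp add: bilinear_ladd bilinear_radd)
  then show ?thesis
    using assms(2) by (simp add: eq_neg_iff_add_eq_0 add.commute)
qed

lemma bilinear_zero_fun: "bilinear (\<lambda>x y. 0)"
  by (simp add: bilinear_def linear_zero)

lemma alternating_bilinear_vanishes_on_span_pair:
  assumes f: "bilinear f" "\<And>x. f x x = 0" and ab: "f a b = 0"
    and x: "x \<in> span {a, b}" and y: "y \<in> span {a, b}"
  shows "f x y = 0"
proof (rule bilinear_eq[OF f(1) bilinear_zero_fun _ _ x y])
  fix u v assume "u \<in> {a, b}" "v \<in> {a, b}"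
  then show "f u v = 0"
    using f(2) ab bilinear_alternating_antisym[OF f, of b a] by auto
qed auto

lemma cochain3_alternating_13:
  assumes "cochain3 \<gamma>"
  shows "\<gamma> x y x = 0"
proof -
  have l2: "linear (\<lambda>y. \<gamma> x y z)" and l3: "linear (\<lambda>z. \<gamma> x y z)" for x y z
    using assms by (auto simp: cochain3_def trilinear_def)
  have "\<gamma> x (y + x) (y + x) = \<gamma> x y y + \<gamma> x y x + (\<gamma> x x y + \<gamma> x x x)"
    by (simp add: linear_add[OF l2] linear_add[OF l3])
  then show ?thesis
    using assms by (simp add: cochain3_def)
qed

lemma cochain3_vanishes_on_span_pair:
  assumes \<gamma>: "cochain3 \<gamma>"
    and x: "x \<in> span {a, b}" and y: "y \<in> span {a, b}" and z: "z \<in> span {a, b}"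
  shows "\<gamma> x y z = 0"
proof (rule bilinear_eq[OF _ bilinear_zero_fun _ _ x y, where f = "\<lambda>x y. \<gamma> x y z"])
  show "bilinear (\<lambda>x y. \<gamma> x y z)"
    using \<gamma> by (simp add: cochain3_def trilinear_def bilinear_def)
  fix u v assume uv: "u \<in> {a, b}" "v \<in> {a, b}"
  have "linear (\<lambda>z. \<gamma> u v z)"
    using \<gamma> by (simp add: cochain3_def trilinear_def)
  moreover have "\<gamma> u v w = 0" if "w \<in> {a, b}" for w
    \<comment> \<open>two of u, v, w coincide\<close>
    using uv that \<gamma> cochain3_alternating_13[OF \<gamma>] by (auto simp: cochain3_def)
  ultimately show "\<gamma> u v z = 0"
    using z by (rule linear_eq_0_on_span)
qed auto

lemma d2_invariant_valued:
  assumes "\<forall>x y. \<alpha> x y \<in> invariants rho"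
  shows "d2 br rho \<alpha> x y z = \<alpha> (br x z) y - \<alpha> (br x y) z - \<alpha> (br y z) x"
  using assms by (simp add: d2_def invariants_def)

lemma invariant_cocycle_vanishes_on_commuting:
  assumes lie: "lie_algebra br" and cocyc: "Z2Q br rho B \<alpha> \<gamma>"
    and inv: "\<forall>x y. \<alpha> x y \<in> invariants rho"
    and zx: "br z x = 0" and zy: "br z y = 0"
  shows "\<alpha> (br x y) z = 0"
proof -
  have br: "bilinear br" "\<And>x. br x x = 0"
    using lie by (auto simp: lie_algebra_def)
  have "br x z = 0" "br y z = 0"
    using zx zy bilinear_alternating_antisym[OF br] by (metis neg_equal_0_iff_equal)+
  moreover have "bilinear \<alpha>"
    using cocyc by (simp add: Z2Q_def cochain2_def)
  moreover have "d2 br rho \<alpha> x y z = 0"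
    using cocyc by (simp add: Z2Q_def)
  ultimately show ?thesis
    using d2_invariant_valued[OF inv] by (simp add: bilinear_lzero)
qed

lemma d3_at_central_pair:
  assumes "cochain3 \<gamma>" and "u1 \<in> centre br" "u2 \<in> centre br"
  shows "d3 br \<gamma> u1 u2 x y = - \<gamma> (br x y) u1 u2"
proof -
  have "\<gamma> 0 v w = 0" for v w
    using assms(1) unfolding cochain3_def trilinear_def by (metis linear_0)
  then show ?thesis
    using assms(2,3) by (simp add: d3_def centre_def)
qed

lemma wedge_contr_symmetric_form:
  assumes B: "bilinear B" "\<forall>u v. B u v = B v u" and "\<alpha> x1 x2 = 0"
  shows "wedge_contr B \<alpha> x1 x2 x3 x4 = 2 * (B (\<alpha> x1 x4) (\<alpha> x2 x3) - B (\<alpha> x1 x3) (\<alpha> x2 x4))"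
  using assms by (simp add: wedge_contr_def bilinear_lzero bilinear_rzero)

lemma Z2Q_exchange_on_derived:
  assumes cocyc: "Z2Q br rho B \<alpha> \<gamma>" and omod: "orthogonal_module br rho B"
    and central: "derived br \<subseteq> centre br" and derived: "derived br = span {a, b}"
    and ab: "\<alpha> a b = 0" and u: "u1 \<in> derived br" "u2 \<in> derived br"
  shows "B (\<alpha> u1 x) (\<alpha> u2 y) = B (\<alpha> u1 y) (\<alpha> u2 x)"
proof -
  have \<alpha>: "bilinear \<alpha>" "\<And>x. \<alpha> x x = 0" and \<gamma>: "cochain3 \<gamma>"
    using cocyc by (auto simp: Z2Q_def cochain2_def)
  have "br x y \<in> span {a, b}"
    unfolding derived[symmetric] derived_def by (auto intro: span_base)
  then have "\<gamma> (br x y) u1 u2 = 0"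
    using cochain3_vanishes_on_span_pair[OF \<gamma>] u derived by blast
  moreover have "u1 \<in> centre br" "u2 \<in> centre br"
    using u central by auto
  ultimately have "d3 br \<gamma> u1 u2 x y = 0"
    using d3_at_central_pair[OF \<gamma>] by simp
  then have "wedge_contr B \<alpha> u1 u2 x y = 0"
    using cocyc unfolding Z2Q_def by simp
  moreover have "\<alpha> u1 u2 = 0"
    using alternating_bilinear_vanishes_on_span_pair[OF \<alpha> ab] u derived by blast
  moreover have "bilinear B" "\<forall>u v. B u v = B v u"
    using omod by (auto simp: orthogonal_module_def)
  ultimately show ?thesis
    using wedge_contr_symmetric_form[of B \<alpha> u1 u2 x y] by simp
qed

theorem lemma2:
  fixes br :: "'l::euclidean_space \<Rightarrow> 'l \<Rightarrow> 'l"
    and rho :: "'l \<Rightarrow> 'a::euclidean_space \<Rightarrow> 'a"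
    and B :: "'a \<Rightarrow> 'a \<Rightarrow> real"
    and \<alpha> :: "'l \<Rightarrow> 'l \<Rightarrow> 'a"
    and \<gamma> :: "'l \<Rightarrow> 'l \<Rightarrow> 'l \<Rightarrow> real"
    and X1 X2 X3 Y Z :: 'l
  assumes nil: "nilpotent_lie br"
    and dim2: "dim (derived br) = 2"
    and central: "derived br \<subseteq> centre br"
    and basis: "Y \<in> derived br" "Z \<in> derived br" "independent {Y, Z}" "Y \<noteq> Z"
               "span {Y, Z} = derived br"
    and brk: "br X1 X2 = Y" "br X1 X3 = Z" "br X2 X3 = 0"
    and omod: "orthogonal_module br rho B"
    and ss: "semisimple_module rho"
    and cocyc: "Z2Q br rho B \<alpha> \<gamma>"
    and inv: "\<forall>x y. \<alpha> x y \<in> invariants rho"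
  shows "\<alpha> Y Z = 0
    \<and> (\<forall>L. br L X1 = 0 \<and> br L X2 = 0 \<longrightarrow> \<alpha> Y L = 0)
    \<and> (\<forall>L. br L X1 = 0 \<and> br L X3 = 0 \<longrightarrow> \<alpha> Z L = 0)
    \<and> (\<forall>U1 U2 L1 L2. U1 \<in> derived br \<and> U2 \<in> derived br \<longrightarrow>
           B (\<alpha> U1 L1) (\<alpha> U2 L2) = B (\<alpha> U1 L2) (\<alpha> U2 L1))"
proof -
  have lie: "lie_algebra br"
    using nil by (simp add: nilpotent_lie_def)
  note vanish = invariant_cocycle_vanishes_on_commuting[OF lie cocyc inv]
  have i: "\<alpha> Y Z = 0"
    using vanish[of Z X1 X2] brk(1) basis(2) central by (auto simp: centre_def)
  have ii: "\<alpha> Y L = 0" if "br L X1 = 0" "br L X2 = 0" for L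
    using vanish[OF that] brk(1) by simp
  have iii: "\<alpha> Z L = 0" if "br L X1 = 0" "br L X3 = 0" for L
    using vanish[OF that] brk(2) by simp
  show ?thesis
    using i ii iii Z2Q_exchange_on_derived[OF cocyc omod central basis(5)[symmetric] i]
    by blast
qed

end
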